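(* Let $n,b$ be integers with $1<n<b$, let $d_0\le d_1\le\cdots\le d_k$ be base-$b$ digits, let $\pi,\sigma$ be permutations of $\{0,\ldots,k\}$, and suppose $p=(d_{\pi(k)},\ldots,d_{\pi(0)})_b=n\cdot(d_{\pi\sigma(k)},\ldots,d_{\pi\sigma(0)})_b$ (an $(n,b,\sigma)$-permutiple) has $j$-th carry equal to $n-1$. If $\{d_0,\ldots,d_k\}$ and $\{\overline{d}_0,\ldots,\overline{d}_k\}$ are the same multiset, then the reflective sibling $$\overline{p}_{\psi^j}=(\overline{d}_{\pi\psi^j(k)},\ldots,\overline{d}_{\pi\psi^j(0)})_b=n\cdot(\overline{d}_{\pi\sigma\psi^j(k)},\ldots,\overline{d}_{\pi\sigma\psi^j(0)})_b$$ may also be represented as $$\overline{p}_{\psi^j}=(d_{\rho\pi\psi^j(k)},\ldots,d_{\rho\pi\psi^j(0)})_b=n\cdot(d_{\rho\pi\sigma\psi^j(k)},\ldots,d_{\rho\pi\sigma\psi^j(0)})_b,$$ where $\rho$ is the reversal permutation $\rho(i)=k-i$.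
   Context: For digits $0\le e_i<b$, $(e_k,\ldots,e_0)_b=\sum_i e_ib^i$ (leading zero digits allowed). A number $(e_k,\ldots,e_0)_b$ is an $(n,b,\sigma)$-permutiple if $(e_k,\ldots,e_0)_b=n\cdot(e_{\sigma(k)},\ldots,e_{\sigma(0)})_b$; here $e_i=d_{\pi(i)}$. Its carries are $c_0=0$, $c_{i+1}=\lfloor (n e_{\sigma(i)}+c_i)/b\rfloor$ ($0\le i\le k$); the $j$-th carry is $c_j$. For a digit $d$ write $\overline{d}=b-1-d$. $\psi$ is the $(k+1)$-cycle $(0,1,\ldots,k)$: $\psi(i)=i+1$ for $i<k$, $\psi(k)=0$. For a carry $c_j=n-1$ (necessarily $0<j\le k$), the reflective sibling of $p$ is the number $\overline{p}_{\psi^j}$ displayed in the claim, which is an $(n,b)$-permutiple satisfying the displayed equation. *)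

theory Defs
  imports "HOL-Combinatorics.Permutations" "HOL-Library.Multiset"
begin

definition digval :: "nat \<Rightarrow> nat \<Rightarrow> (nat \<Rightarrow> nat) \<Rightarrow> nat" where
  "digval b k e = (\<Sum>i=0..k. e i * b ^ i)"

fun carry :: "nat \<Rightarrow> nat \<Rightarrow> (nat \<Rightarrow> nat) \<Rightarrow> nat \<Rightarrow> nat" where
  "carry n b f 0 = 0"
| "carry n b f (Suc i) = (n * f i + carry n b f i) div b"

definition dbar :: "nat \<Rightarrow> nat \<Rightarrow> nat" where
  "dbar b d = b - 1 - d"

definition psi :: "nat \<Rightarrow> nat \<Rightarrow> nat" where
  "psi k i = (if i < k then i + 1 else 0)"

definition rho :: "nat \<Rightarrow> nat \<Rightarrow> nat" where
  "rho k i = k - i"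

end

theory Submission
  imports Defs
begin

text \<open>
  Write the permutiple as p = A b^j + B and q = C b^j + D with B, D < b^j, so that p = n q.
  The carry c_j = n - 1 means n D = B + (n - 1) b^j, and then A = n C + (n - 1). The rotations
  p' = B b^(k+1-j) + A and q' = D b^(k+1-j) + C therefore satisfy
  n q' = p' + (n - 1) (b^(k+1) - 1), which says precisely that the digit complements
  b^(k+1) - 1 - p' and b^(k+1) - 1 - q' form a permutiple again: the reflective sibling.
  If the digit multiset is closed under complement, the sorted digits satisfy
  dbar d_i = d_(k-i), so complementing a digit is the same as reversing its index.
\<close>

definition digsum :: "nat \<Rightarrow> nat \<Rightarrow> (nat \<Rightarrow> nat) \<Rightarrow> nat" where
  "digsum b m g = (\<Sum>i<m. g i * b ^ i)"

lemma digval_eq_digsum: "digval b k g = digsum b (Suc k) g"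
  by (simp add: digval_def digsum_def atLeast0AtMost lessThan_Suc_atMost)

lemma digsum_cong: "(\<And>i. i < m \<Longrightarrow> g i = h i) \<Longrightarrow> digsum b m g = digsum b m h"
  unfolding digsum_def by (rule sum.cong) auto

lemma digsum_dbar_add:
  assumes "\<forall>i<m. g i < b"
  shows "digsum b m (\<lambda>i. dbar b (g i)) + digsum b m g + 1 = b ^ m"
  using assms
proof (induction m)
  case 0
  then show ?case by (simp add: digsum_def)
next
  case (Suc m)
  have "g m < b"
    using Suc.prems by simp
  then have "dbar b (g m) + g m + 1 = b"
    by (simp add: dbar_def)
  then have "dbar b (g m) * b ^ m + g m * b ^ m + b ^ m = b ^ Suc m"
    by (metis distrib_right mult_1 power_Suc)
  then show ?case
    using Suc by (simp add: digsum_def)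
qed

lemma digsum_less:
  assumes "\<forall>i<m. g i < b"
  shows "digsum b m g < b ^ m"
  using digsum_dbar_add[OF assms] by linarith

lemma digsum_split:
  assumes "j \<le> m"
  shows "digsum b m g = digsum b j g + b ^ j * digsum b (m - j) (\<lambda>i. g (i + j))"
proof -
  obtain t where "m = j + t"
    using assms le_Suc_ex by blast
  moreover have "digsum b (j + t) g = digsum b j g + b ^ j * digsum b t (\<lambda>i. g (i + j))"
    by (induction t) (auto simp: digsum_def algebra_simps power_add)
  ultimately show ?thesis by simp
qed

lemma digsum_mod_power:
  assumes "j \<le> m" and "\<forall>i<m. g i < b"
  shows "digsum b m g mod b ^ j = digsum b j g"
proof -
  have "digsum b j g < b ^ j"
    using assms by (intro digsum_less) auto
  then show ?thesis
    using digsum_split[OF assms(1), of b g] by simp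
qed

lemma digsum_rotate:
  assumes "j \<le> m"
  shows "digsum b m (\<lambda>i. g ((i + j) mod m))
           = digsum b (m - j) (\<lambda>i. g (i + j)) + b ^ (m - j) * digsum b j g"
proof -
  have "digsum b m (\<lambda>i. g ((i + j) mod m))
      = digsum b (m - j) (\<lambda>i. g ((i + j) mod m))
        + b ^ (m - j) * digsum b (m - (m - j)) (\<lambda>i. g ((i + (m - j) + j) mod m))"
    by (rule digsum_split) simp
  also have "digsum b (m - j) (\<lambda>i. g ((i + j) mod m)) = digsum b (m - j) (\<lambda>i. g (i + j))"
    by (rule digsum_cong) simp
  also have "digsum b (m - (m - j)) (\<lambda>i. g ((i + (m - j) + j) mod m)) = digsum b j g"
    using assms by (simp add: digsum_def)
  finally show ?thesis .
qed

lemma mult_digsum_carry: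
  "n * digsum b m f
     = digsum b m (\<lambda>i. (n * f i + carry n b f i) mod b) + carry n b f m * b ^ m"
proof (induction m)
  case 0
  then show ?case by (simp add: digsum_def)
next
  case (Suc m)
  let ?r = "\<lambda>i. (n * f i + carry n b f i) mod b" and ?x = "n * f m + carry n b f m"
  have "n * digsum b (Suc m) f = n * digsum b m f + n * f m * b ^ m"
    by (simp add: digsum_def distrib_left)
  also have "\<dots> = digsum b m ?r + ?x * b ^ m"
    unfolding Suc.IH by (simp add: distrib_right)
  also have "?x * b ^ m = (?x mod b) * b ^ m + (?x div b) * b ^ Suc m"
  proof -
    have "(?x mod b + ?x div b * b) * b ^ m = (?x mod b) * b ^ m + (?x div b) * b ^ Suc m"
      by (simp only: algebra_simps power_Suc)
    then show ?thesis
      by simp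
  qed
  finally show ?case
    by (simp add: digsum_def)
qed

lemma mult_digsum_low_digits:
  assumes "0 < b" and "\<forall>i<m. e i < b" and "digsum b m e = n * digsum b m f" and "j \<le> m"
  shows "n * digsum b j f = digsum b j e + carry n b f j * b ^ j"
proof -
  define r where "r = (\<lambda>i. (n * f i + carry n b f i) mod b)"
  have r_digits: "\<forall>i<m. r i < b"
    using \<open>0 < b\<close> by (simp add: r_def)
  have "digsum b m e < b ^ m"
    using assms(2) by (rule digsum_less)
  then have "carry n b f m * b ^ m < 1 * b ^ m"
    using mult_digsum_carry[of n b m f] assms(3) by linarith
  then have "carry n b f m = 0"
    by (simp only: mult_less_cancel2) simp
  then have "digsum b m r = digsum b m e"
    using mult_digsum_carry[of n b m f] assms(3) by (simp add: r_def)
  then have "digsum b j r = digsum b j e"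
    using digsum_mod_power[OF \<open>j \<le> m\<close>] r_digits assms(2) by metis
  then show ?thesis
    using mult_digsum_carry[of n b j f] by (simp add: r_def)
qed

lemma digsum_rotate_mult_carry:
  assumes "0 < n" and "0 < b" and e_digits: "\<forall>i<m. e i < b"
    and mult: "digsum b m e = n * digsum b m f"
    and "j \<le> m" and carry_j: "carry n b f j = n - 1"
  shows "int n * int (digsum b m (\<lambda>i. f ((i + j) mod m)))
           = int (digsum b m (\<lambda>i. e ((i + j) mod m))) + (int n - 1) * (int b ^ m - 1)"
proof -
  define lo_e hi_e lo_f hi_f
    where "lo_e = digsum b j e" and "hi_e = digsum b (m - j) (\<lambda>i. e (i + j))"
      and "lo_f = digsum b j f" and "hi_f = digsum b (m - j) (\<lambda>i. f (i + j))"
  have low: "n * lo_f = lo_e + (n - 1) * b ^ j"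
    using mult_digsum_low_digits[OF \<open>0 < b\<close> e_digits mult \<open>j \<le> m\<close>] carry_j
    by (simp add: lo_e_def lo_f_def)
  have "lo_e + b ^ j * hi_e = n * lo_f + b ^ j * (n * hi_f)"
    using mult digsum_split[OF \<open>j \<le> m\<close>, of b e] digsum_split[OF \<open>j \<le> m\<close>, of b f]
    by (simp add: lo_e_def hi_e_def lo_f_def hi_f_def algebra_simps)
  also have "\<dots> = lo_e + b ^ j * (n - 1 + n * hi_f)"
    using low by (simp add: algebra_simps)
  finally have high: "hi_e = n - 1 + n * hi_f"
    using \<open>0 < b\<close> by simp
  have n_minus_1: "int (n - 1) = int n - 1"
    using \<open>0 < n\<close> by simp
  have low_int: "int n * int lo_f = int lo_e + (int n - 1) * int b ^ j"
    using arg_cong[OF low, of int] by (simp only: of_nat_add of_nat_mult of_nat_power n_minus_1)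
  have high_int: "int hi_e = int n - 1 + int n * int hi_f"
    using arg_cong[OF high, of int] by (simp only: of_nat_add of_nat_mult n_minus_1)
  have power_m: "b ^ (m - j) * b ^ j = b ^ m"
    using \<open>j \<le> m\<close> by (simp flip: power_add)
  have "int n * int (digsum b m (\<lambda>i. f ((i + j) mod m)))
      = int n * int hi_f + int b ^ (m - j) * (int n * int lo_f)"
    using digsum_rotate[OF \<open>j \<le> m\<close>, of b f] by (simp add: hi_f_def lo_f_def algebra_simps)
  also have "\<dots> = int hi_e - (int n - 1) + int b ^ (m - j) * int lo_e
                    + (int n - 1) * (int b ^ (m - j) * int b ^ j)"
    unfolding low_int high_int by (simp add: algebra_simps)
  also have "\<dots> = int (digsum b m (\<lambda>i. e ((i + j) mod m))) + (int n - 1) * (int b ^ m - 1)"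
    using digsum_rotate[OF \<open>j \<le> m\<close>, of b e] power_m
    by (simp add: hi_e_def lo_e_def algebra_simps flip: of_nat_power of_nat_mult)
  finally show ?thesis .
qed

lemma digsum_dbar_mult:
  assumes "\<forall>i<m. e i < b" and "\<forall>i<m. f i < b"
    and "int n * int (digsum b m f) = int (digsum b m e) + (int n - 1) * (int b ^ m - 1)"
  shows "digsum b m (\<lambda>i. dbar b (e i)) = n * digsum b m (\<lambda>i. dbar b (f i))"
proof -
  have compl_e: "int (digsum b m (\<lambda>i. dbar b (e i))) = int b ^ m - 1 - int (digsum b m e)"
    using arg_cong[OF digsum_dbar_add[OF assms(1)], of int] by simp
  have compl_f: "int (digsum b m (\<lambda>i. dbar b (f i))) = int b ^ m - 1 - int (digsum b m f)"
    using arg_cong[OF digsum_dbar_add[OF assms(2)], of int] by simp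
  have "int n * int (digsum b m (\<lambda>i. dbar b (f i)))
      = int n * (int b ^ m - 1) - int n * int (digsum b m f)"
    unfolding compl_f by (simp add: algebra_simps)
  also have "\<dots> = int (digsum b m (\<lambda>i. dbar b (e i)))"
    unfolding assms(3) compl_e by (simp add: algebra_simps)
  finally show ?thesis
    by (metis of_nat_eq_iff of_nat_mult)
qed

lemma digsum_rotate_dbar_mult:
  assumes "0 < n" and "0 < b"
    and e_digits: "\<forall>i<m. e i < b" and f_digits: "\<forall>i<m. f i < b"
    and "digsum b m e = n * digsum b m f"
    and "j \<le> m" and "carry n b f j = n - 1"
  shows "digsum b m (\<lambda>i. dbar b (e ((i + j) mod m)))
           = n * digsum b m (\<lambda>i. dbar b (f ((i + j) mod m)))"
proof (rule digsum_dbar_mult)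
  show "\<forall>i<m. e ((i + j) mod m) < b" "\<forall>i<m. f ((i + j) mod m) < b"
    using e_digits f_digits by simp_all
qed (use digsum_rotate_mult_carry assms in blast)

lemma funpow_psi: "i \<le> k \<Longrightarrow> (psi k ^^ j) i = (i + j) mod Suc k"
proof (induction j)
  case 0
  then show ?case by simp
next
  case (Suc j)
  have "(i + j) mod Suc k < Suc k"
    by simp
  then show ?case
    using Suc by (auto simp: psi_def mod_Suc less_Suc_eq)
qed

lemma digval_funpow_psi:
  "digval b k (\<lambda>i. g ((psi k ^^ j) i)) = digsum b (Suc k) (\<lambda>i. g ((i + j) mod Suc k))"
  unfolding digval_eq_digsum by (rule digsum_cong) (simp add: funpow_psi)

lemma sorted_dbar_eq_rho:
  assumes sorted: "\<forall>i i'. i \<le> i' \<and> i' \<le> k \<longrightarrow> d i \<le> d i'"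
    and same_mset: "image_mset d (mset_set {0..k}) = image_mset (\<lambda>i. dbar b (d i)) (mset_set {0..k})"
    and "i \<le> k"
  shows "dbar b (d i) = d (rho k i)"
proof -
  define xs where "xs = map d [0..<Suc k]"
  define ys where "ys = map (\<lambda>i. dbar b (d (k - i))) [0..<Suc k]"
  have "sorted xs"
    unfolding xs_def using sorted
    by (auto simp: sorted_iff_nth_mono nth_map_upt less_Suc_eq_le simp del: upt_Suc)
  moreover have "sorted ys"
    unfolding ys_def using sorted
    by (auto simp: sorted_iff_nth_mono nth_map_upt less_Suc_eq_le dbar_def simp del: upt_Suc
        intro!: diff_le_mono2)
  moreover have "ys = rev (map (\<lambda>i. dbar b (d i)) [0..<Suc k])"
    unfolding ys_def by (rule nth_equalityI) (auto simp: rev_nth nth_map_upt simp del: upt_Suc)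
  then have "mset ys = mset xs"
    using same_mset
    by (simp add: xs_def atLeastLessThanSuc_atLeastAtMost del: upt_Suc)
  ultimately have "xs = ys"
    by (metis properties_for_sort sorted_sort_id)
  then have "xs ! (k - i) = ys ! (k - i)"
    by simp
  then show ?thesis
    using \<open>i \<le> k\<close> unfolding xs_def ys_def
    by (simp add: nth_map_upt less_Suc_eq_le rho_def del: upt_Suc)
qed

theorem corollary22:
  fixes n b k j :: nat and d \<pi> \<sigma> :: "nat \<Rightarrow> nat"
  assumes "1 < n" and "n < b"
    and digits: "\<forall>i\<le>k. d i < b"
    and sorted: "\<forall>i i'. i \<le> i' \<and> i' \<le> k \<longrightarrow> d i \<le> d i'"
    and perm_pi: "\<pi> permutes {0..k}"
    and perm_sigma: "\<sigma> permutes {0..k}"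
    and permutiple: "digval b k (d \<circ> \<pi>) = n * digval b k (d \<circ> \<pi> \<circ> \<sigma>)"
    and "j \<le> k"
    and carry_j: "carry n b (d \<circ> \<pi> \<circ> \<sigma>) j = n - 1"
    and same_mset: "image_mset d (mset_set {0..k}) = image_mset (\<lambda>i. dbar b (d i)) (mset_set {0..k})"
  shows "digval b k (\<lambda>i. dbar b (d (\<pi> ((psi k ^^ j) i))))
           = n * digval b k (\<lambda>i. dbar b (d (\<pi> (\<sigma> ((psi k ^^ j) i)))))
       \<and> digval b k (\<lambda>i. dbar b (d (\<pi> ((psi k ^^ j) i))))
           = digval b k (\<lambda>i. d (rho k (\<pi> ((psi k ^^ j) i))))
       \<and> digval b k (\<lambda>i. d (rho k (\<pi> ((psi k ^^ j) i))))
           = n * digval b k (\<lambda>i. d (rho k (\<pi> (\<sigma> ((psi k ^^ j) i)))))"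
proof -
  have pi_le: "\<pi> i \<le> k" and sigma_le: "\<sigma> i \<le> k" if "i \<le> k" for i
    using that permutes_in_image[OF perm_pi] permutes_in_image[OF perm_sigma] by auto
  have sibling: "digval b k (\<lambda>i. dbar b (d (\<pi> ((psi k ^^ j) i))))
      = n * digval b k (\<lambda>i. dbar b (d (\<pi> (\<sigma> ((psi k ^^ j) i)))))"
    unfolding digval_funpow_psi[where g = "\<lambda>x. dbar b (d (\<pi> x))"]
      digval_funpow_psi[where g = "\<lambda>x. dbar b (d (\<pi> (\<sigma> x)))"]
  proof (rule digsum_rotate_dbar_mult)
    show "\<forall>i<Suc k. d (\<pi> i) < b" "\<forall>i<Suc k. d (\<pi> (\<sigma> i)) < b"
      using digits pi_le sigma_le by (simp_all add: less_Suc_eq_le)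
    show "digsum b (Suc k) (\<lambda>i. d (\<pi> i)) = n * digsum b (Suc k) (\<lambda>i. d (\<pi> (\<sigma> i)))"
      using permutiple by (simp add: digval_eq_digsum comp_def)
    show "carry n b (\<lambda>i. d (\<pi> (\<sigma> i))) j = n - 1"
      using carry_j by (simp add: comp_def)
  qed (use assms in auto)
  have "digval b k (\<lambda>i. dbar b (d (\<pi> (g i)))) = digval b k (\<lambda>i. d (rho k (\<pi> (g i))))"
    if "\<And>i. i \<le> k \<Longrightarrow> g i \<le> k" for g
    unfolding digval_eq_digsum using that pi_le
    by (intro digsum_cong) (simp add: sorted_dbar_eq_rho[OF sorted same_mset] less_Suc_eq_le)
  moreover have "(psi k ^^ j) i \<le> k" and "\<sigma> ((psi k ^^ j) i) \<le> k" if "i \<le> k" for i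
    using that sigma_le by (simp_all add: funpow_psi less_Suc_eq_le)
  ultimately show ?thesis
    using sibling by simp
qed

end
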